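(* Let $A$ be a cyclic Leibniz algebra generated by $a$, with notation $L_a$, $p(x)=p_1(x)^{n_1}\cdots p_s(x)^{n_s}$ as in the context. Then the Frattini subalgebra of $A$ is $$\Phi(A)=\{b\in A : q(L_a)(b)=0\},\qquad q(x)=p_1(x)^{n_1-1}\cdots p_s(x)^{n_s-1}.$$
   Context: A (left) Leibniz algebra is an algebra satisfying $x(yz)=(xy)z+y(xz)$ for all $x,y,z$; all algebras are finite-dimensional over a field $F$. $A$ is a cyclic Leibniz algebra generated by $a$: $A$ is generated as an algebra by the single element $a$, and with $a^1=a$, $a^{k+1}=aa^k$, the elements $a,a^2,\dots,a^n$ form a basis of $A$ ($n=\dim A$). Write $aa^n=\alpha_2a^2+\cdots+\alpha_na^n$ (the coefficient of $a$ is necessarily $0$). $L_a:A\to A$ denotes left multiplication $b\mapsto ab$; its matrix in this basis is the companion matrix of $p(x)=x^n-\alpha_nx^{n-1}-\cdots-\alpha_2x$. Factor $p(x)=p_1(x)^{n_1}\cdots p_s(x)^{n_s}$ with $p_1,\dots,p_s$ the distinct monic irreducible factors over $F$, and $p_1(x)=x$. The Frattini subalgebra $\Phi(A)$ is the intersection of all maximal subalgebras of $A$. *)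

theory Defs
  imports "HOL-Computational_Algebra.Polynomial_Factorial" "HOL-Computational_Algebra.Field_as_Ring"
begin

definition bilinear_product ::
  "('f::field \<Rightarrow> 'v::ab_group_add \<Rightarrow> 'v) \<Rightarrow> ('v \<Rightarrow> 'v \<Rightarrow> 'v) \<Rightarrow> bool" where
  "bilinear_product sc m \<longleftrightarrow>
     (\<forall>x y z. m (x + y) z = m x z + m y z) \<and>
     (\<forall>x y z. m x (y + z) = m x y + m x z) \<and>
     (\<forall>c x y. m (sc c x) y = sc c (m x y)) \<and>
     (\<forall>c x y. m x (sc c y) = sc c (m x y))"

definition left_leibniz :: "('v::ab_group_add \<Rightarrow> 'v \<Rightarrow> 'v) \<Rightarrow> bool" where
  "left_leibniz m \<longleftrightarrow> (\<forall>x y z. m x (m y z) = m (m x y) z + m y (m x z))"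

text \<open>Left-normed powers: a^1 = a, a^(k+1) = a a^k (a^0 is unused, set to 0).\<close>
fun lpow :: "('v::zero \<Rightarrow> 'v \<Rightarrow> 'v) \<Rightarrow> 'v \<Rightarrow> nat \<Rightarrow> 'v" where
  "lpow m a 0 = 0"
| "lpow m a (Suc 0) = a"
| "lpow m a (Suc (Suc k)) = m a (lpow m a (Suc k))"

definition subalgebra ::
  "('f::field \<Rightarrow> 'v::ab_group_add \<Rightarrow> 'v) \<Rightarrow> ('v \<Rightarrow> 'v \<Rightarrow> 'v) \<Rightarrow> 'v set \<Rightarrow> bool" where
  "subalgebra sc m S \<longleftrightarrow> module.subspace sc S \<and> (\<forall>x\<in>S. \<forall>y\<in>S. m x y \<in> S)"

definition maximal_subalgebra ::
  "('f::field \<Rightarrow> 'v::ab_group_add \<Rightarrow> 'v) \<Rightarrow> ('v \<Rightarrow> 'v \<Rightarrow> 'v) \<Rightarrow> 'v set \<Rightarrow> bool" where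
  "maximal_subalgebra sc m S \<longleftrightarrow> subalgebra sc m S \<and> S \<noteq> UNIV \<and>
     (\<forall>T. subalgebra sc m T \<and> S \<subseteq> T \<longrightarrow> T = S \<or> T = UNIV)"

definition frattini ::
  "('f::field \<Rightarrow> 'v::ab_group_add \<Rightarrow> 'v) \<Rightarrow> ('v \<Rightarrow> 'v \<Rightarrow> 'v) \<Rightarrow> 'v set" where
  "frattini sc m = \<Inter> {S. maximal_subalgebra sc m S}"

definition generated_by ::
  "('f::field \<Rightarrow> 'v::ab_group_add \<Rightarrow> 'v) \<Rightarrow> ('v \<Rightarrow> 'v \<Rightarrow> 'v) \<Rightarrow> 'v \<Rightarrow> bool" where
  "generated_by sc m a \<longleftrightarrow> \<Inter> {S. subalgebra sc m S \<and> a \<in> S} = UNIV"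

definition poly_op ::
  "('f::field \<Rightarrow> 'v::ab_group_add \<Rightarrow> 'v) \<Rightarrow> 'f poly \<Rightarrow> ('v \<Rightarrow> 'v) \<Rightarrow> 'v \<Rightarrow> 'v" where
  "poly_op sc q L b = (\<Sum>i\<le>degree q. sc (coeff q i) ((L ^^ i) b))"

end

theory Submission
  imports Defs
begin

(*
  Write L = L_a for left multiplication by a.  The map  ev : F[x] -> A,
  ev h = h(L) a,  is linear, surjective (it hits the basis a, a^2, ..., a^n)
  and ev (f * g) = f(L) (ev g); its kernel is the ideal (p).  Hence A is
  F[x]/(p) as an F[x]-module.  The left Leibniz identity makes every product
  L(x) y vanish, so the product of A is  ev g * y = g(0) L y : it is governed by
  constant terms alone; in particular p(0) = 0, i.e. x divides p.

  From this one reads off the subalgebras: for every divisor f of p the image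
  M f = ev (f F[x]) (ideal_image f below) is a subalgebra, every L-invariant
  subspace is of this form, and a proper subalgebra either lies in M x or
  contains an element with nonzero constant term, which forces it to be
  L-invariant.  Consequently the
  maximal subalgebras are exactly the M f for the prime factors f of p, so the
  Frattini subalgebra is ev (r F[x]) with r the product of the distinct prime
  factors of p.  Finally, since p = q r, an element ev g lies in ev (r F[x])
  iff p divides q g, i.e. iff q(L) (ev g) = 0.
*)


section \<open>Evaluating a polynomial at a linear operator\<close>

context vector_space begin

lemma linear_funpow: "Vector_Spaces.linear scale scale L \<Longrightarrow> Vector_Spaces.linear scale scale (L ^^ i)"
  by (induct i) (auto simp: linear_id dest: Vector_Spaces.linear_compose)

lemma poly_op_eq_sum:
  "degree q < N \<Longrightarrow> poly_op scale q L v = (\<Sum>i<N. coeff q i *s (L ^^ i) v)"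
  unfolding poly_op_def
  by (intro sum.mono_neutral_left) (auto simp: coeff_eq_0)

lemma poly_op_zero_poly [simp]: "poly_op scale 0 L v = 0"
  by (simp add: poly_op_def)

lemma poly_op_add: "poly_op scale (f + g) L v = poly_op scale f L v + poly_op scale g L v"
proof -
  define N where "N = Suc (max (degree f) (degree g))"
  have "degree (f + g) < N" "degree f < N" "degree g < N"
    unfolding N_def using degree_add_le_max[of f g] by auto
  then show ?thesis
    by (simp add: poly_op_eq_sum scale_left_distrib sum.distrib del: sum.lessThan_Suc)
qed

lemma poly_op_smult: "poly_op scale (smult c f) L v = c *s poly_op scale f L v"
proof -
  have "degree (smult c f) < Suc (degree f)"
    using degree_smult_le[of c f] by (rule le_imp_less_Suc)
  then show ?thesis
    unfolding poly_op_eq_sum[OF \<open>degree (smult c f) < _\<close>] poly_op_eq_sum[OF lessI]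
    by (simp add: scale_sum_right del: sum.lessThan_Suc)
qed

lemma poly_op_diff: "poly_op scale (f - g) L v = poly_op scale f L v - poly_op scale g L v"
  using poly_op_add[of f "smult (-1) g"] poly_op_smult[of "-1" g] by simp

lemma poly_op_pCons: "poly_op scale (pCons c f) L v = c *s v + poly_op scale f L (L v)"
proof -
  have "degree (pCons c f) < Suc (Suc (degree f))" "degree f < Suc (degree f)"
    using degree_pCons_le[of c f] by auto
  then show ?thesis
    unfolding poly_op_eq_sum[OF \<open>degree (pCons c f) < _\<close>] poly_op_eq_sum[OF \<open>degree f < _\<close>]
      sum.lessThan_Suc_shift
    by (simp add: funpow_Suc_right del: funpow.simps sum.lessThan_Suc)
qed

lemma poly_op_zero_vec:
  assumes "Vector_Spaces.linear scale scale L"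
  shows "poly_op scale f L 0 = 0"
proof -
  interpret Li: Vector_Spaces.linear scale scale "L ^^ i" for i
    using linear_funpow[OF assms] .
  show ?thesis by (simp add: poly_op_def)
qed

lemma poly_op_commute:
  assumes "Vector_Spaces.linear scale scale L"
  shows "poly_op scale f L (L v) = L (poly_op scale f L v)"
proof -
  interpret L: Vector_Spaces.linear scale scale L by fact
  show ?thesis
    by (simp add: poly_op_def L.sum L.scale funpow_swap1)
qed

lemma poly_op_mult:
  assumes "Vector_Spaces.linear scale scale L"
  shows "poly_op scale (f * g) L v = poly_op scale f L (poly_op scale g L v)"
proof (induct f arbitrary: v rule: pCons_induct)
  case (pCons c f)
  have "poly_op scale (pCons c f * g) L v
        = c *s poly_op scale g L v + poly_op scale (f * g) L (L v)"
    by (simp add: poly_op_add poly_op_smult poly_op_pCons)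
  also have "\<dots> = c *s poly_op scale g L v + poly_op scale f L (L (poly_op scale g L v))"
    using pCons by (simp add: poly_op_commute[OF assms])
  finally show ?case by (simp add: poly_op_pCons)
qed simp

end


section \<open>Polynomial ideals and prime factorizations\<close>

text \<open>An ideal of F[x] (a set closed under subtraction and under multiplication
  by polynomials) containing a nonzero element is principal: it is generated by
  a nonzero element of least degree.\<close>
lemma poly_ideal_generator:
  fixes J :: "'a::field poly set"
  assumes mult: "\<And>h k. h \<in> J \<Longrightarrow> k * h \<in> J"
    and diff: "\<And>h k. h \<in> J \<Longrightarrow> k \<in> J \<Longrightarrow> h - k \<in> J"
    and nonzero: "x \<in> J" "x \<noteq> 0"
  obtains d where "d \<in> J" "\<And>h. h \<in> J \<Longrightarrow> d dvd h"
proof -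
  obtain d where d: "d \<in> J" "d \<noteq> 0"
    and least: "\<And>h. h \<in> J \<Longrightarrow> h \<noteq> 0 \<Longrightarrow> degree d \<le> degree h"
    using ex_has_least_nat[of "\<lambda>h. h \<in> J \<and> h \<noteq> 0" x degree] nonzero by blast
  have "d dvd h" if "h \<in> J" for h
  proof (rule ccontr)
    assume "\<not> d dvd h"
    then have "h mod d \<noteq> 0" by (simp add: dvd_eq_mod_eq_0)
    moreover have "h mod d \<in> J"
      using diff[OF that mult[OF d(1), of "h div d"]] by (simp add: minus_div_mult_eq_mod)
    ultimately have "degree d \<le> degree (h mod d)" by (rule least[rotated])
    with degree_mod_less'[OF d(2) \<open>h mod d \<noteq> 0\<close>] show False by simp
  qed
  with d(1) show thesis by (rule that)
qed

lemma prod_distinct_primes_dvd_iff: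
  fixes A :: "'a::factorial_semiring_gcd set"
  assumes "finite A" "\<And>f. f \<in> A \<Longrightarrow> prime f"
  shows "\<Prod>A dvd g \<longleftrightarrow> (\<forall>f\<in>A. f dvd g)"
proof
  show "\<forall>f\<in>A. f dvd g" if "\<Prod>A dvd g"
  proof
    fix f assume "f \<in> A"
    then have "f dvd \<Prod>A" using dvd_prodI[OF assms(1), of f id] by simp
    then show "f dvd g" using that by (rule dvd_trans)
  qed
  show "\<Prod>A dvd g" if "\<forall>f\<in>A. f dvd g"
    using assms that
  proof (induct A rule: finite_induct)
    case (insert x F)
    have "prime x" using insert.prems by simp
    have "\<not> x dvd \<Prod>F"
    proof
      assume "x dvd \<Prod>F"
      then obtain y where "y \<in> F" "x dvd y"
        using prime_dvd_prod_iff[OF insert.hyps(1) \<open>prime x\<close>, of id] by auto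
      with insert.prems have "x = y" by (intro primes_dvd_imp_eq) auto
      with insert.hyps(2) \<open>y \<in> F\<close> show False by simp
    qed
    with \<open>prime x\<close> have "coprime x (\<Prod>F)" by (simp add: prime_imp_coprime)
    with insert show ?case by (simp add: divides_mult)
  qed simp
qed

lemma normalize_eq_reduced_times_radical:
  fixes x :: "'a::factorial_semiring_multiplicative"
  assumes "x \<noteq> 0"
  shows "normalize x = (\<Prod>f\<in>prime_factors x. f ^ (multiplicity f x - 1)) * \<Prod>(prime_factors x)"
proof -
  have "f ^ multiplicity f x = f ^ (multiplicity f x - 1) * f" if "f \<in> prime_factors x" for f
    using that power_Suc2[of f "multiplicity f x - 1"] by (simp add: prime_factors_multiplicity)
  then have "(\<Prod>f\<in>prime_factors x. f ^ multiplicity f x)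
             = (\<Prod>f\<in>prime_factors x. f ^ (multiplicity f x - 1) * f)"
    by (rule prod.cong[OF refl])
  then show ?thesis
    by (simp add: prod_prime_factors[OF assms] prod.distrib)
qed


section \<open>The cyclic Leibniz algebra as a quotient of F[x]\<close>

text \<open>A Leibniz algebra (A, m) with basis a, a^2, ..., a^n of left-normed powers,
  and p = x^n - \<Sum> \<alpha>_k x^(k-1) encoding the relation a a^n = \<Sum> \<alpha>_k a^k.\<close>
locale cyclic_leibniz = vector_space sc
  for sc :: "'f::field_gcd \<Rightarrow> 'v::ab_group_add \<Rightarrow> 'v" +
  fixes m :: "'v \<Rightarrow> 'v \<Rightarrow> 'v" and a :: 'v and n :: nat and \<alpha> :: "nat \<Rightarrow> 'f" and p :: "'f poly"
  assumes bil: "bilinear_product sc m"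
    and leib: "left_leibniz m"
    and n_pos: "n \<ge> 1"
    and inj: "inj_on (lpow m a) {1..n}"
    and indep: "\<not> dependent (lpow m a ` {1..n})"
    and spans: "span (lpow m a ` {1..n}) = UNIV"
    and alpha: "m a (lpow m a n) = (\<Sum>k=1..n. sc (\<alpha> k) (lpow m a k))"
    and p_def: "p = monom 1 n - (\<Sum>k=1..n. monom (\<alpha> k) (k - 1))"
begin

lemma m_add_left: "m (x + y) z = m x z + m y z" using bil by (simp add: bilinear_product_def)
lemma m_add_right: "m x (y + z) = m x y + m x z" using bil by (simp add: bilinear_product_def)
lemma m_scale_left: "m (sc c x) y = sc c (m x y)" using bil by (simp add: bilinear_product_def)
lemma m_scale_right: "m x (sc c y) = sc c (m x y)" using bil by (simp add: bilinear_product_def)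
lemma m_zero_left [simp]: "m 0 y = 0" by (metis add_cancel_right_right m_add_left)
lemma m_zero_right [simp]: "m x 0 = 0" by (metis add_cancel_right_right m_add_right)

lemma linear_La: "Vector_Spaces.linear sc sc (m a)"
  using vector_space_axioms by (simp add: Vector_Spaces.linear_iff m_add_right m_scale_right)

definition ev :: "'f poly \<Rightarrow> 'v" where "ev h = poly_op sc h (m a) a"

lemma ev_pCons: "ev (pCons c h) = sc c a + m a (ev h)"
  unfolding ev_def by (simp add: poly_op_pCons poly_op_commute[OF linear_La])

lemma ev_X: "m a (ev h) = ev (pCons 0 h)"
  by (simp add: ev_pCons)

lemma ev_0 [simp]: "ev 0 = 0" by (simp add: ev_def)
lemma ev_add: "ev (f + g) = ev f + ev g" by (simp add: ev_def poly_op_add)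
lemma ev_diff: "ev (f - g) = ev f - ev g" by (simp add: ev_def poly_op_diff)
lemma ev_smult: "ev (smult c f) = sc c (ev f)" by (simp add: ev_def poly_op_smult)
lemma ev_mult: "ev (f * g) = poly_op sc f (m a) (ev g)"
  by (simp add: ev_def poly_op_mult[OF linear_La])

lemma ev_sum: "ev (sum g A) = (\<Sum>x\<in>A. ev (g x))"
  by (induct A rule: infinite_finite_induct) (simp_all add: ev_add)

lemma ev_monom: "ev (monom c k) = sc c (lpow m a (Suc k))"
proof (induct k arbitrary: c)
  case 0 then show ?case by (simp add: ev_def poly_op_def monom_0)
next
  case (Suc k)
  then show ?case by (simp add: monom_Suc ev_pCons m_scale_right)
qed

lemma lpow_Suc_funpow: "lpow m a (Suc i) = ((m a) ^^ i) a"
  by (induct i) simp_all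

lemma ev_p: "ev p = 0"
proof -
  have "ev (monom 1 n) = m a (lpow m a n)"
    using n_pos by (cases n) (simp_all add: ev_monom)
  then show ?thesis
    using alpha by (simp add: p_def ev_diff ev_sum ev_monom)
qed

text \<open>ev is onto: its range is a subspace containing the basis a^(k+1) = ev (x^k).\<close>
lemma ev_surj: "\<exists>h. v = ev h"
proof -
  have "span (lpow m a ` {1..n}) \<subseteq> range ev"
  proof (rule span_minimal)
    show "lpow m a ` {1..n} \<subseteq> range ev"
    proof
      fix v assume "v \<in> lpow m a ` {1..n}"
      then obtain k where "k \<ge> 1" "v = lpow m a k" by auto
      then have "v = ev (monom 1 (k - 1))" by (simp add: ev_monom)
      then show "v \<in> range ev" by blast
    qed
    show "subspace (range ev)"
      unfolding subspace_def
      by (auto simp: ev_add[symmetric] ev_smult[symmetric] intro: range_eqI[of _ _ 0])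
  qed
  then show ?thesis using spans by auto
qed

lemma coeff_p: "coeff p i = (if i = n then 1 else if i < n then - \<alpha> (Suc i) else 0)"
proof -
  have "coeff (\<Sum>k=1..n. monom (\<alpha> k) (k - 1)) i = (\<Sum>k=1..n. if k - 1 = i then \<alpha> k else 0)"
    by (simp add: coeff_sum)
  also have "\<dots> = (if i < n then \<alpha> (Suc i) else 0)"
  proof (cases "i < n")
    case True
    have "(\<Sum>k=1..n. if k - 1 = i then \<alpha> k else 0) = (\<Sum>k\<in>{Suc i}. if k - 1 = i then \<alpha> k else 0)"
      by (rule sum.mono_neutral_right) (use True in auto)
    then show ?thesis using True by simp
  next
    case False
    then show ?thesis by (auto intro!: sum.neutral)
  qed
  finally have "coeff (\<Sum>k=1..n. monom (\<alpha> k) (k - 1)) i = (if i < n then \<alpha> (Suc i) else 0)" .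
  then show ?thesis by (simp add: p_def)
qed

lemma degree_p: "degree p = n"
proof (rule order.antisym)
  show "degree p \<le> n" by (rule degree_le) (simp add: coeff_p)
  show "n \<le> degree p" by (rule le_degree) (simp add: coeff_p)
qed

lemma monic_p: "lead_coeff p = 1" by (simp add: degree_p coeff_p)

lemma p_nonzero: "p \<noteq> 0" using monic_p by auto

text \<open>No nonzero polynomial of degree below n annihilates a, by independence
  of a, ..., a^n.\<close>
lemma ev_small_degree:
  assumes "degree h < n" "ev h = 0"
  shows "h = 0"
proof -
  define g where "g = lpow m a \<circ> Suc"
  have img: "lpow m a ` {1..n} = g ` {..<n}"
    by (simp only: g_def image_comp[symmetric] image_Suc_lessThan)
  have inj_g: "inj_on g {..<n}"
    unfolding g_def by (rule comp_inj_on) (use inj in \<open>simp_all add: image_Suc_lessThan\<close>)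
  define u where "u v = coeff h (the_inv_into {..<n} g v)" for v
  have "(\<Sum>v\<in>g ` {..<n}. sc (u v) v) = (\<Sum>i<n. sc (coeff h i) (g i))"
    by (subst sum.reindex[OF inj_g]) (simp add: u_def the_inv_into_f_f[OF inj_g])
  also have "\<dots> = ev h"
    by (simp add: ev_def poly_op_eq_sum[OF assms(1)] g_def lpow_Suc_funpow)
  finally have lin_comb: "(\<Sum>v\<in>g ` {..<n}. sc (u v) v) = 0" using assms(2) by simp
  have "coeff h i = 0" for i
  proof (cases "i < n")
    case True
    then have "u (g i) = 0"
      by (intro independentD[OF indep[unfolded img] _ order.refl lin_comb]) auto
    with True show ?thesis by (simp add: u_def the_inv_into_f_f[OF inj_g])
  qed (use assms(1) in \<open>simp add: coeff_eq_0\<close>)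
  then show ?thesis by (simp add: poly_eq_iff)
qed

lemma ev_eq_0_iff: "ev h = 0 \<longleftrightarrow> p dvd h"
proof -
  have multiple: "ev (k * p) = 0" for k
    by (simp add: ev_mult ev_p poly_op_zero_vec[OF linear_La])
  have "ev h = 0 \<Longrightarrow> p dvd h"
  proof (rule ccontr)
    assume "ev h = 0" "\<not> p dvd h"
    have "h mod p = h - h div p * p" by (simp add: minus_div_mult_eq_mod)
    then have "ev (h mod p) = ev h - ev (h div p * p)" by (simp only: ev_diff)
    with \<open>ev h = 0\<close> have "ev (h mod p) = 0" using multiple[of "h div p"] by simp
    moreover have "h mod p \<noteq> 0" using \<open>\<not> p dvd h\<close> by (simp add: dvd_eq_mod_eq_0)
    moreover have "degree (h mod p) < n"
      using degree_mod_less'[OF p_nonzero \<open>h mod p \<noteq> 0\<close>] degree_p by simp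
    ultimately show False using ev_small_degree by blast
  qed
  moreover have "ev h = 0" if "p dvd h"
    using that multiple by (auto simp: dvd_def mult.commute)
  ultimately show ?thesis by blast
qed

lemma ev_eq_iff: "ev f = ev g \<longleftrightarrow> p dvd f - g"
  using ev_eq_0_iff[of "f - g"] by (simp add: ev_diff)


section \<open>Consequences of the Leibniz identity\<close>

text \<open>Every element of L_a(A) is a left annihilator: L_a(a) is one, and the
  set of left annihilators is stable under L_a.\<close>
lemma La_left_annihilates: "m (m a w) y = 0"
proof -
  have leibniz: "m a (m x z) = m (m a x) z + m x (m a z)" for x z
    using leib unfolding left_leibniz_def by blast
  have aa: "m (m a a) z = 0" for z
    using leibniz[of a z, symmetric] by (simp only: add_cancel_left_left)
  have step: "m (m a x) y = 0" if "\<And>z. m x z = 0" for x y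
    using leibniz[of x y] that by simp
  have "m (m a (ev h)) y = 0" for h y
  proof (induct h arbitrary: y rule: pCons_induct)
    case (pCons c h)
    have "m (m a (ev (pCons c h))) y = sc c (m (m a a) y) + m (m a (m a (ev h))) y"
      by (simp add: ev_pCons m_add_right m_scale_right m_add_left m_scale_left)
    also have "\<dots> = 0"
      using aa step[OF pCons.hyps(2)] by simp
    finally show ?case .
  qed simp
  then show ?thesis using ev_surj by metis
qed

lemma m_ev_left: "m (ev g) y = sc (coeff g 0) (m a y)"
  by (cases g rule: pCons_cases)
    (simp add: ev_pCons m_add_left m_scale_left La_left_annihilates)

lemma a_nonzero: "a \<noteq> 0"
proof
  assume "a = 0"
  then have "0 \<in> lpow m a ` {1..n}" using n_pos by (auto intro!: image_eqI[of _ _ 1])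
  then show False using indep dependent_zero by blast
qed

text \<open>p(0) = 0: as ev p = 0, the product rule above gives p(0) (a y) = 0; if
  p(0) \<noteq> 0 then L_a = 0, and ev p = p(0) a forces a = 0.\<close>
lemma coeff_p_0: "coeff p 0 = 0"
proof (rule ccontr)
  assume c: "coeff p 0 \<noteq> 0"
  have "sc (coeff p 0) (m a y) = 0" for y
    using m_ev_left[of p y] ev_p by simp
  with c have a_annihilates: "m a y = 0" for y by simp
  obtain h where "p = pCons (coeff p 0) h" by (metis coeff_pCons_0 pCons_cases)
  then have "sc (coeff p 0) a = 0"
    using ev_p ev_pCons[of "coeff p 0" h] a_annihilates by simp
  with c a_nonzero show False by simp
qed

abbreviation X :: "'f poly" where "X \<equiv> [:0, 1:]"

lemma X_prime_factor: "X \<in> prime_factors p"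
proof -
  have "prime X"
    by (simp add: prime_def prime_elem_linear_field_poly normalize_poly_eq_map_poly)
  moreover obtain h where "p = pCons 0 h"
    using coeff_p_0 by (metis coeff_pCons_0 pCons_cases)
  then have "p = X * h" by simp
  then have "X dvd p" by (rule dvdI)
  ultimately show ?thesis using p_nonzero by (simp add: in_prime_factors_iff)
qed


section \<open>Subalgebras and the maximal subalgebras\<close>

definition ideal_image :: "'f poly \<Rightarrow> 'v set" where
  "ideal_image f = range (\<lambda>h. ev (f * h))"

lemma mem_ideal_image:
  assumes "f dvd p"
  shows "ev g \<in> ideal_image f \<longleftrightarrow> f dvd g"
proof
  assume "ev g \<in> ideal_image f"
  then obtain h where "ev g = ev (f * h)" by (auto simp: ideal_image_def)
  then have "p dvd g - f * h" by (simp add: ev_eq_iff)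
  with assms have "f dvd g - f * h" by (rule dvd_trans)
  then show "f dvd g" by (metis dvd_add dvd_triv_left diff_add_cancel)
qed (auto simp: ideal_image_def)

lemma ideal_image_antimono: "f dvd g \<Longrightarrow> ideal_image g \<subseteq> ideal_image f"
  by (auto simp: ideal_image_def dvd_def mult.assoc)

text \<open>M f is a subalgebra, since x y = x(0) L_a y and L_a corresponds to x\<cdot>.\<close>
lemma ideal_image_subalgebra: "subalgebra sc m (ideal_image f)"
  unfolding subalgebra_def
proof
  show "subspace (ideal_image f)"
    unfolding subspace_def ideal_image_def
  proof (intro conjI ballI allI)
    show "0 \<in> range (\<lambda>h. ev (f * h))" by (rule range_eqI[of _ _ 0]) simp
  next
    fix x y assume "x \<in> range (\<lambda>h. ev (f * h))" "y \<in> range (\<lambda>h. ev (f * h))"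
    then obtain h k where "x = ev (f * h)" "y = ev (f * k)" by auto
    then have "x + y = ev (f * (h + k))" by (simp add: distrib_left ev_add)
    then show "x + y \<in> range (\<lambda>h. ev (f * h))" by blast
  next
    fix c x assume "x \<in> range (\<lambda>h. ev (f * h))"
    then obtain h where "x = ev (f * h)" by auto
    then have "sc c x = ev (f * smult c h)" by (simp add: ev_smult)
    then show "sc c x \<in> range (\<lambda>h. ev (f * h))" by blast
  qed
  show "\<forall>x\<in>ideal_image f. \<forall>y\<in>ideal_image f. m x y \<in> ideal_image f"
  proof (intro ballI)
    fix x y assume "x \<in> ideal_image f" "y \<in> ideal_image f"
    then obtain h k where xy: "x = ev (f * h)" "y = ev (f * k)" by (auto simp: ideal_image_def)
    have "m x y = sc (coeff (f * h) 0) (ev (pCons 0 (f * k)))"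
      by (simp add: xy m_ev_left ev_X)
    also have "\<dots> = ev (smult (coeff (f * h) 0) (pCons 0 (f * k)))"
      by (rule ev_smult[symmetric])
    also have "\<dots> = ev (f * smult (coeff (f * h) 0) (pCons 0 k))"
      by simp
    finally show "m x y \<in> ideal_image f" unfolding ideal_image_def by blast
  qed
qed

text \<open>For a prime factor f, M f is proper: it misses a = ev 1.\<close>
lemma ideal_image_proper:
  assumes "f \<in> prime_factors p"
  shows "ideal_image f \<noteq> UNIV"
proof
  assume "ideal_image f = UNIV"
  then have "f dvd 1"
    using mem_ideal_image[of f 1] in_prime_factors_imp_dvd[OF assms] by simp
  then show False using in_prime_factors_imp_prime[OF assms] not_prime_unit by blast
qed

lemma ideal_image_subset_prime_eq:
  assumes "f \<in> prime_factors p" "g \<in> prime_factors p" "ideal_image f \<subseteq> ideal_image g"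
  shows "f = g"
proof -
  have "ev (f * 1) \<in> ideal_image f" unfolding ideal_image_def by blast
  then have "g dvd f"
    using assms(3) mem_ideal_image[OF in_prime_factors_imp_dvd[OF assms(2)]] by auto
  moreover have "prime f" "prime g" using assms(1,2) by (simp_all add: in_prime_factors_imp_prime)
  ultimately show ?thesis using primes_dvd_imp_eq[of g f] by simp
qed

text \<open>The L_a-invariant subspaces are exactly the M d with d dividing p:
  their preimages under ev are ideals of F[x] containing p.\<close>
lemma invariant_subspace_eq_ideal_image:
  assumes sub: "subspace S" and inv: "\<And>y. y \<in> S \<Longrightarrow> m a y \<in> S"
  obtains d where "d dvd p" "S = ideal_image d"
proof -
  define J where "J = {h. ev h \<in> S}"
  have mult: "k * h \<in> J" if "h \<in> J" for h k
  proof (induct k rule: pCons_induct)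
    case (pCons c k)
    have "ev (pCons c k * h) = sc c (ev h) + m a (ev (k * h))"
      by (simp add: ev_add ev_smult ev_X)
    with pCons that sub inv show ?case by (simp add: J_def subspace_add subspace_scale)
  qed (use sub in \<open>simp add: J_def subspace_0\<close>)
  have diff: "h - k \<in> J" if "h \<in> J" "k \<in> J" for h k
    using that sub by (simp add: J_def ev_diff subspace_diff)
  have "p \<in> J" using sub by (simp add: J_def ev_p subspace_0)
  then obtain d where "d \<in> J" and gen: "\<And>h. h \<in> J \<Longrightarrow> d dvd h"
    using poly_ideal_generator[OF mult diff _ p_nonzero] by blast
  have "S = ideal_image d"
  proof
    show "S \<subseteq> ideal_image d"
    proof
      fix y assume "y \<in> S"
      obtain h where "y = ev h" using ev_surj by blast
      with \<open>y \<in> S\<close> have "d dvd h" using gen by (simp add: J_def)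
      then obtain k where "h = d * k" by (rule dvdE)
      then show "y \<in> ideal_image d" using \<open>y = ev h\<close> by (simp add: ideal_image_def)
    qed
    show "ideal_image d \<subseteq> S"
      using mult[OF \<open>d \<in> J\<close>] by (auto simp: ideal_image_def J_def mult.commute)
  qed
  with gen[OF \<open>p \<in> J\<close>] show thesis by (rule that)
qed

text \<open>Every proper subalgebra lies in some M f, f a prime factor of p: either it
  lies in M x, or it contains an element with nonzero constant term; then it
  is L_a-invariant, hence equal to some M d with d a proper divisor of p.\<close>
lemma proper_subalgebra_below_prime:
  assumes S: "subalgebra sc m S" "S \<noteq> UNIV"
  shows "\<exists>f\<in>prime_factors p. S \<subseteq> ideal_image f"
proof (cases "S \<subseteq> ideal_image X")
  case False
  then obtain s where "s \<in> S" "s \<notin> ideal_image X" by blast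
  moreover obtain g where "s = ev g" using ev_surj by blast
  ultimately have "ev g \<in> S" "ev g \<notin> ideal_image X" by simp_all
  then have c: "coeff g 0 \<noteq> 0"
    using mem_ideal_image[OF in_prime_factors_imp_dvd[OF X_prime_factor]]
    by (auto simp: dvd_iff_poly_eq_0 poly_0_coeff_0)
  have sub: "subspace S" using S by (simp add: subalgebra_def)
  have inv: "m a y \<in> S" if "y \<in> S" for y
  proof -
    have "m (ev g) y \<in> S" using S \<open>ev g \<in> S\<close> that by (simp add: subalgebra_def)
    with sub have "sc (inverse (coeff g 0)) (m (ev g) y) \<in> S" by (rule subspace_scale)
    with c show ?thesis by (simp add: m_ev_left)
  qed
  obtain d where "d dvd p" and S_eq: "S = ideal_image d"
    using invariant_subspace_eq_ideal_image[OF sub inv] by blast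
  have "\<not> is_unit d"
  proof
    assume "is_unit d"
    then have "ev g \<in> S" for g using mem_ideal_image[OF \<open>d dvd p\<close>] S_eq by (simp add: unit_imp_dvd)
    then have "S = UNIV" using ev_surj by (metis UNIV_eq_I)
    with S(2) show False by simp
  qed
  moreover have "d \<noteq> 0" using \<open>d dvd p\<close> p_nonzero by auto
  ultimately obtain f where "f dvd d" "prime f" using prime_divisor_exists by blast
  with \<open>d dvd p\<close> have "f \<in> prime_factors p"
    using p_nonzero by (auto simp: in_prime_factors_iff intro: dvd_trans)
  moreover have "S \<subseteq> ideal_image f"
    using S_eq ideal_image_antimono[OF \<open>f dvd d\<close>] by simp
  ultimately show ?thesis by blast
qed (use X_prime_factor in blast)

lemma maximal_subalgebra_iff:
  "maximal_subalgebra sc m S \<longleftrightarrow> S \<in> ideal_image ` prime_factors p"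
proof
  assume S: "maximal_subalgebra sc m S"
  then have "subalgebra sc m S" "S \<noteq> UNIV" by (simp_all add: maximal_subalgebra_def)
  then obtain f where f: "f \<in> prime_factors p" "S \<subseteq> ideal_image f"
    using proper_subalgebra_below_prime by blast
  with S have "ideal_image f = S \<or> ideal_image f = UNIV"
    using ideal_image_subalgebra[of f] unfolding maximal_subalgebra_def by blast
  with ideal_image_proper[OF f(1)] have "ideal_image f = S" by blast
  with f show "S \<in> ideal_image ` prime_factors p" by blast
next
  assume "S \<in> ideal_image ` prime_factors p"
  then obtain f where f: "f \<in> prime_factors p" "S = ideal_image f" by blast
  have "T = S \<or> T = UNIV" if T: "subalgebra sc m T" "S \<subseteq> T" for T
  proof (cases "T = UNIV")
    case False
    then obtain g where "g \<in> prime_factors p" "T \<subseteq> ideal_image g"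
      using proper_subalgebra_below_prime T(1) by blast
    with f T(2) have "f = g" using ideal_image_subset_prime_eq by blast
    with f T(2) \<open>T \<subseteq> ideal_image g\<close> show ?thesis by blast
  qed simp
  with f show "maximal_subalgebra sc m S"
    using ideal_image_subalgebra ideal_image_proper by (auto simp: maximal_subalgebra_def)
qed


lemma frattini_eq_Inter: "frattini sc m = \<Inter> (ideal_image ` prime_factors p)"
  unfolding frattini_def by (simp add: maximal_subalgebra_iff[abs_def])

theorem frattini_eq_kernel:
  assumes q_def: "q = (\<Prod>f\<in>prime_factors p. f ^ (multiplicity f p - 1))"
  shows "frattini sc m = {b. poly_op sc q (m a) b = 0}"
proof -
  define r where "r = \<Prod>(prime_factors p)"
  have "normalize p = p"
    using monic_p by (simp add: normalize_poly_eq_map_poly map_poly_idI)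
  then have p_eq: "p = q * r"
    using normalize_eq_reduced_times_radical[OF p_nonzero] by (simp add: q_def r_def)
  then have "q \<noteq> 0" using p_nonzero by auto
  have membership: "ev g \<in> frattini sc m \<longleftrightarrow> poly_op sc q (m a) (ev g) = 0" for g
  proof -
    have "ev g \<in> frattini sc m \<longleftrightarrow> (\<forall>f\<in>prime_factors p. f dvd g)"
      by (auto simp: frattini_eq_Inter mem_ideal_image in_prime_factors_imp_dvd)
    also have "\<dots> \<longleftrightarrow> r dvd g"
      unfolding r_def by (rule prod_distinct_primes_dvd_iff[symmetric]) auto
    also have "\<dots> \<longleftrightarrow> p dvd q * g"
      using p_eq \<open>q \<noteq> 0\<close> by simp
    also have "\<dots> \<longleftrightarrow> poly_op sc q (m a) (ev g) = 0"
      by (simp add: ev_eq_0_iff[symmetric] ev_mult)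
    finally show ?thesis .
  qed
  show ?thesis
  proof (rule set_eqI)
    fix b
    obtain g where "b = ev g" using ev_surj by blast
    with membership show "b \<in> frattini sc m \<longleftrightarrow> b \<in> {b. poly_op sc q (m a) b = 0}" by simp
  qed
qed

end


theorem mainTheorem7:
  fixes sc :: "'f::field_gcd \<Rightarrow> 'v::ab_group_add \<Rightarrow> 'v"
    and m :: "'v \<Rightarrow> 'v \<Rightarrow> 'v"
    and a :: 'v
    and n :: nat
    and \<alpha> :: "nat \<Rightarrow> 'f"
    and p q :: "'f poly"
  assumes vs: "vector_space sc"
    and bil: "bilinear_product sc m"
    and leib: "left_leibniz m"
    and gen: "generated_by sc m a"
    and n_pos: "n \<ge> 1"
    and inj: "inj_on (lpow m a) {1..n}"
    and indep: "\<not> module.dependent sc (lpow m a ` {1..n})"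
    and spans: "module.span sc (lpow m a ` {1..n}) = UNIV"
    and alpha: "m a (lpow m a n) = (\<Sum>k=1..n. sc (\<alpha> k) (lpow m a k))"
    and p_def: "p = monom 1 n - (\<Sum>k=1..n. monom (\<alpha> k) (k - 1))"
    and q_def: "q = (\<Prod>f\<in>prime_factors p. f ^ (multiplicity f p - 1))"
  shows "frattini sc m = {b. poly_op sc q (m a) b = 0}"
proof -
  have "cyclic_leibniz sc m a n \<alpha> p"
    unfolding cyclic_leibniz_def cyclic_leibniz_axioms_def
    using vs bil leib n_pos inj indep spans alpha p_def by blast
  then show ?thesis using q_def by (rule cyclic_leibniz.frattini_eq_kernel)
qed

end
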